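(* Let $\mathbb{F}$ be a distribution, $n\in\mathbb{N}$, and $\hat\rho_n$ a risk estimator such that $\hat\rho_n(\boldsymbol{X})$ is bounded and non-negative and $\rho_{\mathbb{F}}(S(c))$ is finite for all $c\ge0$. Then the function $c\mapsto\rho_{\mathbb{F}}(S(c))$ is non-increasing and continuous on $[0,\infty)$, with $|\rho_{\mathbb{F}}(S(c))-\rho_{\mathbb{F}}(S(c'))|\le |c-c'|\,\|\hat\rho_n(\boldsymbol{X})\|_{\sup}$. Consequently, if $c^*_{\mathbb{F}}\in(0,\infty)$, then the optimally scaled estimator $c^*_{\mathbb{F}}\hat\rho_n$ is risk unbiased under $\mathbb{F}$, i.e. $$\rho_{\mathbb{F}}\big(X+c^*_{\mathbb{F}}\,\hat\rho_n(\boldsymbol{X})\big)=0.$$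
   Context: Setting: on a probability space, $X$ is a real random variable and $\boldsymbol{X}=(X_1,\dots,X_n)$ a sample independent of $X$, with $X,X_1,\dots,X_n$ i.i.d. with distribution $\mathbb{F}$. $\rho$ is a monetary risk measure (monotone: $X\le Y\Rightarrow\rho(X)\ge\rho(Y)$; cash invariant: $\rho(X+m)=\rho(X)-m$), positively homogeneous and law-invariant; $\rho_{\mathbb{F}}$ denotes $\rho$ evaluated under the law induced by $\mathbb{F}$. A risk estimator is a measurable $\hat\rho_n\colon\mathbb{R}^n\to\mathbb{R}$ that is cash invariant ($\hat\rho_n(\boldsymbol{x}+m)=\hat\rho_n(\boldsymbol{x})-m$) and positively homogeneous ($\hat\rho_n(\lambda\boldsymbol{x})=\lambda\hat\rho_n(\boldsymbol{x})$, $\lambda\ge0$). $S(c):=X+c\,\hat\rho_n(\boldsymbol{X})$ and $c^*_{\mathbb{F}}:=\inf\{c>0:\rho_{\mathbb{F}}(S(c))\le0\}$ with $\inf\emptyset=\infty$. $\|\cdot\|_{\sup}$ is the essential supremum norm. *)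

theory Defs
  imports "HOL-Probability.Probability"
begin

definition risk_measure :: "'w measure \<Rightarrow> (('w \<Rightarrow> real) \<Rightarrow> ereal) \<Rightarrow> bool" where
  "risk_measure M \<rho> \<longleftrightarrow>
     (\<forall>Y Z. Y \<in> borel_measurable M \<longrightarrow> Z \<in> borel_measurable M \<longrightarrow>
        (AE \<omega> in M. Y \<omega> \<le> Z \<omega>) \<longrightarrow> \<rho> Z \<le> \<rho> Y) \<and>
     (\<forall>Y m. Y \<in> borel_measurable M \<longrightarrow> \<rho> (\<lambda>\<omega>. Y \<omega> + m) = \<rho> Y - ereal m) \<and>
     (\<forall>Y (l::real). Y \<in> borel_measurable M \<longrightarrow> l \<ge> 0 \<longrightarrow>
        \<rho> (\<lambda>\<omega>. l * Y \<omega>) = ereal l * \<rho> Y) \<and>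
     (\<forall>Y Z. Y \<in> borel_measurable M \<longrightarrow> Z \<in> borel_measurable M \<longrightarrow>
        distr M borel Y = distr M borel Z \<longrightarrow> \<rho> Y = \<rho> Z)"

text \<open>Risk estimator on R^n, where points of R^n are represented as elements
of the product space PiM {..<n} (\<lambda>_. borel) (extensional functions on {..<n}).\<close>
definition risk_estimator :: "nat \<Rightarrow> ((nat \<Rightarrow> real) \<Rightarrow> real) \<Rightarrow> bool" where
  "risk_estimator n R \<longleftrightarrow>
     R \<in> borel_measurable (PiM {..<n} (\<lambda>_. borel)) \<and>
     (\<forall>x \<in> space (PiM {..<n} (\<lambda>_. (borel :: real measure))). \<forall>m::real.
        R (\<lambda>i\<in>{..<n}. x i + m) = R x - m) \<and>
     (\<forall>x \<in> space (PiM {..<n} (\<lambda>_. (borel :: real measure))). \<forall>l::real. l \<ge> 0 \<longrightarrow>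
        R (\<lambda>i\<in>{..<n}. l * x i) = l * R x)"

text \<open>The sample vector (X_1,...,X_n) at \<omega> (indices 0..n-1).\<close>
definition sample :: "nat \<Rightarrow> (nat \<Rightarrow> 'w \<Rightarrow> real) \<Rightarrow> 'w \<Rightarrow> nat \<Rightarrow> real" where
  "sample n Xs \<omega> = (\<lambda>i\<in>{..<n}. Xs i \<omega>)"

definition S :: "('w \<Rightarrow> real) \<Rightarrow> ((nat \<Rightarrow> real) \<Rightarrow> real) \<Rightarrow> nat \<Rightarrow> (nat \<Rightarrow> 'w \<Rightarrow> real)
    \<Rightarrow> real \<Rightarrow> 'w \<Rightarrow> real" where
  "S X R n Xs c = (\<lambda>\<omega>. X \<omega> + c * R (sample n Xs \<omega>))"

text \<open>c* = inf {c > 0. \<rho>(S(c)) \<le> 0}, with inf of the empty set = \<infinity>.\<close>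
definition cstar :: "(('w \<Rightarrow> real) \<Rightarrow> ereal) \<Rightarrow> (real \<Rightarrow> 'w \<Rightarrow> real) \<Rightarrow> ereal" where
  "cstar \<rho> SS = Inf (ereal ` {c. 0 < c \<and> \<rho> (SS c) \<le> 0})"

end

theory Submission
  imports Defs
begin

(* Cash invariance bounds the effect of scaling the estimator: shifting c moves rho(X + c Z) by at most |c - d| ess sup |Z|. *)

lemma continuous_on_vanishes_at_Inf_nonpos:
  fixes g :: "real \<Rightarrow> real"
  assumes cont: "continuous_on {0<..} g"
    and ne: "{c. 0 < c \<and> g c \<le> 0} \<noteq> {}"
    and pos: "0 < Inf {c. 0 < c \<and> g c \<le> 0}"
  shows "g (Inf {c. 0 < c \<and> g c \<le> 0}) = 0"
proof -
  define A where "A = {c. 0 < c \<and> g c \<le> 0}"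
  define c0 where "c0 = Inf A"
  have bdd: "bdd_below A"
    unfolding A_def by (rule bdd_belowI[of _ 0]) auto
  have above: "c0 \<le> c" if "c \<in> A" for c
    unfolding c0_def using cInf_lower[OF that bdd] .
  have c0: "0 < c0"
    using pos unfolding c0_def A_def .
  have cont_half: "continuous_on {c0/2..} g"
    using c0 by (intro continuous_on_subset[OF cont]) auto
  have "A \<subseteq> {c \<in> {c0/2..}. g c \<le> 0}"
    using above c0 unfolding A_def by fastforce
  moreover have "closed {c \<in> {c0/2..}. g c \<le> 0}"
    by (rule continuous_on_closed_Collect_le[OF cont_half continuous_on_const]) simp
  ultimately have "closure A \<subseteq> {c \<in> {c0/2..}. g c \<le> 0}"
    by (rule closure_minimal)
  moreover have "c0 \<in> closure A"
    unfolding c0_def using ne bdd by (simp add: A_def closure_contains_Inf)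
  ultimately have le: "g c0 \<le> 0"
    by auto
  have "{c0/2..<c0} \<subseteq> {c \<in> {c0/2..c0}. 0 \<le> g c}"
  proof
    fix c assume c: "c \<in> {c0/2..<c0}"
    then have "c \<notin> A"
      using above by fastforce
    with c c0 show "c \<in> {c \<in> {c0/2..c0}. 0 \<le> g c}"
      unfolding A_def by auto
  qed
  moreover have "closed {c \<in> {c0/2..c0}. 0 \<le> g c}"
    by (rule continuous_on_closed_Collect_le[OF continuous_on_const])
      (use cont_half in \<open>auto intro: continuous_on_subset\<close>)
  ultimately have "closure {c0/2..<c0} \<subseteq> {c \<in> {c0/2..c0}. 0 \<le> g c}"
    by (rule closure_minimal)
  moreover have "c0 \<in> closure {c0/2..<c0}"
    using c0 by simp
  ultimately have ge: "0 \<le> g c0"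
    by blast
  show ?thesis
    using le ge unfolding c0_def A_def by simp
qed

lemma cstar_risk_zero:
  fixes \<rho> :: "('w \<Rightarrow> real) \<Rightarrow> ereal" and g :: "real \<Rightarrow> real"
  assumes real: "\<And>c. 0 < c \<Longrightarrow> \<rho> (SS c) = ereal (g c)"
    and cont: "continuous_on {0<..} g"
    and pos: "0 < cstar \<rho> SS" and fin: "cstar \<rho> SS < \<infinity>"
  shows "\<rho> (SS (real_of_ereal (cstar \<rho> SS))) = 0"
proof -
  define A where "A = {c. 0 < c \<and> g c \<le> 0}"
  have cstar_A: "cstar \<rho> SS = Inf (ereal ` A)"
    unfolding cstar_def A_def using real by (intro arg_cong[where f = "\<lambda>A. Inf (ereal ` A)"]) auto
  have ne: "A \<noteq> {}"
    using fin unfolding cstar_A by (auto simp: top_ereal_def)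
  have "bdd_below A"
    unfolding A_def by (rule bdd_belowI[of _ 0]) auto
  then have cstar_Inf: "cstar \<rho> SS = ereal (Inf A)"
    using ereal_Inf'[OF _ ne] unfolding cstar_A by simp
  then have "0 < Inf A"
    using pos by simp
  then have "g (Inf A) = 0"
    using continuous_on_vanishes_at_Inf_nonpos[OF cont] ne unfolding A_def by simp
  then show ?thesis
    using real[of "Inf A"] \<open>0 < Inf A\<close> unfolding cstar_Inf by simp
qed

lemma antimono_lipschitz_on:
  fixes g :: "real \<Rightarrow> real"
  assumes "0 \<le> K"
    and antimono: "\<And>c c'. c \<in> U \<Longrightarrow> c' \<in> U \<Longrightarrow> c \<le> c' \<Longrightarrow> g c' \<le> g c"
    and decrease: "\<And>c c'. c \<in> U \<Longrightarrow> c' \<in> U \<Longrightarrow> c \<le> c' \<Longrightarrow> g c - (c' - c) * K \<le> g c'"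
  shows "K-lipschitz_on U g"
  using \<open>0 \<le> K\<close>
proof (rule lipschitz_on_leI[rotated])
  fix c c' assume "c \<in> U" "c' \<in> U" "c \<le> c'"
  then show "dist (g c) (g c') \<le> K * dist c c'"
    using antimono[of c c'] decrease[of c c'] by (simp add: dist_real_def algebra_simps)
qed

lemma risk_measure_antimono_AE:
  assumes "risk_measure M \<rho>" "Y \<in> borel_measurable M" "Z \<in> borel_measurable M"
    and "AE \<omega> in M. Y \<omega> \<le> Z \<omega>"
  shows "\<rho> Z \<le> \<rho> Y"
proof -
  have "\<forall>Y Z. Y \<in> borel_measurable M \<longrightarrow> Z \<in> borel_measurable M \<longrightarrow>
      (AE \<omega> in M. Y \<omega> \<le> Z \<omega>) \<longrightarrow> \<rho> Z \<le> \<rho> Y"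
    using assms(1) unfolding risk_measure_def by (rule conjunct1)
  then show ?thesis
    using assms(2-4) by blast
qed

lemma risk_measure_cash_invariant:
  assumes "risk_measure M \<rho>" "Y \<in> borel_measurable M"
  shows "\<rho> (\<lambda>\<omega>. Y \<omega> + m) = \<rho> Y - ereal m"
proof -
  have "\<forall>Y m. Y \<in> borel_measurable M \<longrightarrow> \<rho> (\<lambda>\<omega>. Y \<omega> + m) = \<rho> Y - ereal m"
    using assms(1) unfolding risk_measure_def by (blast dest: conjunct2 conjunct1)
  then show ?thesis
    using assms(2) by blast
qed

lemma risk_measure_add_scaled_antimono:
  assumes "risk_measure M \<rho>" "Y \<in> borel_measurable M" "Z \<in> borel_measurable M"
    and "AE \<omega> in M. 0 \<le> Z \<omega>" "c \<le> c'"
  shows "\<rho> (\<lambda>\<omega>. Y \<omega> + c' * Z \<omega>) \<le> \<rho> (\<lambda>\<omega>. Y \<omega> + c * Z \<omega>)"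
proof (rule risk_measure_antimono_AE[OF assms(1)])
  show "(\<lambda>\<omega>. Y \<omega> + c * Z \<omega>) \<in> borel_measurable M"
    using assms(2,3) by measurable
  show "(\<lambda>\<omega>. Y \<omega> + c' * Z \<omega>) \<in> borel_measurable M"
    using assms(2,3) by measurable
  show "AE \<omega> in M. Y \<omega> + c * Z \<omega> \<le> Y \<omega> + c' * Z \<omega>"
    using assms(4) by eventually_elim (use \<open>c \<le> c'\<close> in \<open>simp add: mult_right_mono\<close>)
qed

lemma risk_measure_add_scaled_decrease:
  assumes "risk_measure M \<rho>" "Y \<in> borel_measurable M" "Z \<in> borel_measurable M"
    and "AE \<omega> in M. Z \<omega> \<le> K" "c \<le> c'"
  shows "\<rho> (\<lambda>\<omega>. Y \<omega> + c * Z \<omega>) - ereal ((c' - c) * K) \<le> \<rho> (\<lambda>\<omega>. Y \<omega> + c' * Z \<omega>)"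
proof -
  have meas_c: "(\<lambda>\<omega>. Y \<omega> + c * Z \<omega>) \<in> borel_measurable M"
    using assms(2,3) by measurable
  have meas_c': "(\<lambda>\<omega>. Y \<omega> + c' * Z \<omega>) \<in> borel_measurable M"
    using assms(2,3) by measurable
  have meas_shift: "(\<lambda>\<omega>. (Y \<omega> + c * Z \<omega>) + (c' - c) * K) \<in> borel_measurable M"
    using assms(2,3) by measurable
  have "AE \<omega> in M. Y \<omega> + c' * Z \<omega> \<le> (Y \<omega> + c * Z \<omega>) + (c' - c) * K"
    using assms(4) proof eventually_elim
    case (elim \<omega>)
    then have "(c' - c) * Z \<omega> \<le> (c' - c) * K"
      using \<open>c \<le> c'\<close> by (intro mult_left_mono) auto
    then show ?case
      by (simp add: algebra_simps)
  qed
  then have "\<rho> (\<lambda>\<omega>. (Y \<omega> + c * Z \<omega>) + (c' - c) * K) \<le> \<rho> (\<lambda>\<omega>. Y \<omega> + c' * Z \<omega>)"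
    by (rule risk_measure_antimono_AE[OF assms(1) meas_c' meas_shift])
  moreover have "\<rho> (\<lambda>\<omega>. (Y \<omega> + c * Z \<omega>) + (c' - c) * K)
      = \<rho> (\<lambda>\<omega>. Y \<omega> + c * Z \<omega>) - ereal ((c' - c) * K)"
    by (rule risk_measure_cash_invariant[OF assms(1) meas_c])
  ultimately show ?thesis
    by simp
qed

lemma risk_measure_add_scaled_lipschitz:
  assumes "risk_measure M \<rho>" "Y \<in> borel_measurable M" "Z \<in> borel_measurable M"
    and "AE \<omega> in M. 0 \<le> Z \<omega>" "AE \<omega> in M. Z \<omega> \<le> K" "0 \<le> K"
    and finite: "\<And>c. 0 \<le> c \<Longrightarrow> \<bar>\<rho> (\<lambda>\<omega>. Y \<omega> + c * Z \<omega>)\<bar> \<noteq> \<infinity>"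
  shows "K-lipschitz_on {0..} (\<lambda>c. real_of_ereal (\<rho> (\<lambda>\<omega>. Y \<omega> + c * Z \<omega>)))"
proof (rule antimono_lipschitz_on[OF \<open>0 \<le> K\<close>])
  fix c c' :: real assume "c \<in> {0..}" "c' \<in> {0..}" "c \<le> c'"
  obtain a where a: "\<rho> (\<lambda>\<omega>. Y \<omega> + c * Z \<omega>) = ereal a"
    using finite[of c] \<open>c \<in> {0..}\<close> by (cases "\<rho> (\<lambda>\<omega>. Y \<omega> + c * Z \<omega>)") auto
  obtain b where b: "\<rho> (\<lambda>\<omega>. Y \<omega> + c' * Z \<omega>) = ereal b"
    using finite[of c'] \<open>c' \<in> {0..}\<close> by (cases "\<rho> (\<lambda>\<omega>. Y \<omega> + c' * Z \<omega>)") auto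
  show "real_of_ereal (\<rho> (\<lambda>\<omega>. Y \<omega> + c' * Z \<omega>)) \<le> real_of_ereal (\<rho> (\<lambda>\<omega>. Y \<omega> + c * Z \<omega>))"
    "real_of_ereal (\<rho> (\<lambda>\<omega>. Y \<omega> + c * Z \<omega>)) - (c' - c) * K \<le> real_of_ereal (\<rho> (\<lambda>\<omega>. Y \<omega> + c' * Z \<omega>))"
    using risk_measure_add_scaled_antimono[OF assms(1-4) \<open>c \<le> c'\<close>]
      risk_measure_add_scaled_decrease[OF assms(1-3,5) \<open>c \<le> c'\<close>]
    unfolding a b by simp_all
qed

lemma esssup_abs_bounded:
  fixes f :: "'w \<Rightarrow> real"
  assumes "prob_space M" "f \<in> borel_measurable M" "AE \<omega> in M. \<bar>f \<omega>\<bar> \<le> B"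
  shows "\<exists>K. esssup M (\<lambda>\<omega>. ereal \<bar>f \<omega>\<bar>) = ereal K \<and> 0 \<le> K"
proof -
  have meas: "(\<lambda>\<omega>. ereal \<bar>f \<omega>\<bar>) \<in> borel_measurable M"
    using assms(2) by measurable
  have "esssup M (\<lambda>\<omega>. ereal \<bar>f \<omega>\<bar>) \<le> ereal B"
    using assms(3) by (intro esssup_I[OF meas]) auto
  moreover have "0 \<le> esssup M (\<lambda>\<omega>. ereal \<bar>f \<omega>\<bar>)"
    using esssup_mono[of "\<lambda>_. 0" M "\<lambda>\<omega>. ereal \<bar>f \<omega>\<bar>"]
      esssup_const[of M "0 :: ereal"] prob_space.emeasure_space_1[OF assms(1)]
    by simp
  ultimately show ?thesis
    by (cases "esssup M (\<lambda>\<omega>. ereal \<bar>f \<omega>\<bar>)") auto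
qed

lemma risk_estimator_sample_measurable:
  assumes "risk_estimator n R" "\<And>i. i < n \<Longrightarrow> Xs i \<in> borel_measurable M"
  shows "(\<lambda>\<omega>. R (sample n Xs \<omega>)) \<in> borel_measurable M"
proof -
  have "sample n Xs \<in> M \<rightarrow>\<^sub>M PiM {..<n} (\<lambda>_. borel)"
    unfolding sample_def by (rule measurable_restrict) (use assms(2) in auto)
  moreover have "R \<in> borel_measurable (PiM {..<n} (\<lambda>_. borel))"
    using assms(1) unfolding risk_estimator_def by blast
  ultimately show ?thesis
    using measurable_comp by (simp add: o_def)
qed

theorem mainTheorem2:
  fixes M :: "'w measure" and F :: "real measure" and n :: nat
    and X :: "'w \<Rightarrow> real" and Xs :: "nat \<Rightarrow> 'w \<Rightarrow> real"
    and \<rho> :: "('w \<Rightarrow> real) \<Rightarrow> ereal" and R :: "(nat \<Rightarrow> real) \<Rightarrow> real"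
  assumes "prob_space M"
    and "X \<in> borel_measurable M" and "\<And>i. i < n \<Longrightarrow> Xs i \<in> borel_measurable M"
    and "distr M borel X = F" and "\<And>i. i < n \<Longrightarrow> distr M borel (Xs i) = F"
    and "prob_space.indep_vars M (\<lambda>_. borel)
           (\<lambda>j. case j of None \<Rightarrow> X | Some i \<Rightarrow> Xs i) (insert None (Some ` {..<n}))"
    and "risk_measure M \<rho>"
    and "risk_estimator n R"
    and "\<exists>B. AE \<omega> in M. \<bar>R (sample n Xs \<omega>)\<bar> \<le> B"
    and "AE \<omega> in M. 0 \<le> R (sample n Xs \<omega>)"
    and "\<And>c. c \<ge> 0 \<Longrightarrow> \<bar>\<rho> (S X R n Xs c)\<bar> \<noteq> \<infinity>"
  shows "(\<forall>c c'. 0 \<le> c \<and> c \<le> c' \<longrightarrow> \<rho> (S X R n Xs c') \<le> \<rho> (S X R n Xs c))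
       \<and> continuous_on {0..} (\<lambda>c. \<rho> (S X R n Xs c))
       \<and> (\<forall>c c'. 0 \<le> c \<and> 0 \<le> c' \<longrightarrow>
            \<bar>\<rho> (S X R n Xs c) - \<rho> (S X R n Xs c')\<bar>
              \<le> ereal \<bar>c - c'\<bar> * esssup M (\<lambda>\<omega>. ereal \<bar>R (sample n Xs \<omega>)\<bar>))
       \<and> (0 < cstar \<rho> (S X R n Xs) \<and> cstar \<rho> (S X R n Xs) < \<infinity> \<longrightarrow>
            \<rho> (S X R n Xs (real_of_ereal (cstar \<rho> (S X R n Xs)))) = 0)"
proof -
  define Z where "Z \<omega> = R (sample n Xs \<omega>)" for \<omega>
  define g where "g = (\<lambda>c. real_of_ereal (\<rho> (S X R n Xs c)))"
  have S_eq: "S X R n Xs c = (\<lambda>\<omega>. X \<omega> + c * Z \<omega>)" for c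
    unfolding S_def Z_def ..
  have Z: "Z \<in> borel_measurable M"
    unfolding Z_def by (rule risk_estimator_sample_measurable[OF assms(8,3)])
  obtain K where K: "esssup M (\<lambda>\<omega>. ereal \<bar>Z \<omega>\<bar>) = ereal K" "0 \<le> K"
    using esssup_abs_bounded[OF assms(1) Z] assms(9) unfolding Z_def by blast
  have Z_le_K: "AE \<omega> in M. Z \<omega> \<le> K"
    using esssup_AE[of "\<lambda>\<omega>. ereal \<bar>Z \<omega>\<bar>" M] unfolding K by (auto elim: AE_mp)
  have real: "\<rho> (S X R n Xs c) = ereal (g c)" if "0 \<le> c" for c
    using assms(11)[OF that] unfolding g_def by (cases "\<rho> (S X R n Xs c)") auto
  have antimono: "\<rho> (S X R n Xs c') \<le> \<rho> (S X R n Xs c)" if "c \<le> c'" for c c'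
    unfolding S_eq by (rule risk_measure_add_scaled_antimono[OF assms(7,2) Z _ that])
      (use assms(10) in \<open>simp add: Z_def\<close>)
  have finite: "\<bar>\<rho> (\<lambda>\<omega>. X \<omega> + c * Z \<omega>)\<bar> \<noteq> \<infinity>" if "0 \<le> c" for c
    using assms(11)[OF that] unfolding S_eq .
  have "K-lipschitz_on {0..} g"
    unfolding g_def S_eq
    by (rule risk_measure_add_scaled_lipschitz[OF assms(7,2) Z _ Z_le_K K(2) finite])
      (use assms(10) in \<open>simp add: Z_def\<close>)
  then have "continuous_on {0..} g"
    by (rule lipschitz_on_continuous_on)
  then have "continuous_on {0..} (\<lambda>c. ereal (g c))"
    by (rule continuous_on_ereal)
  then have "continuous_on {0..} (\<lambda>c. \<rho> (S X R n Xs c))"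
    by (rule continuous_on_cong[THEN iffD1, rotated 2]) (auto simp: real)
  moreover have "\<bar>\<rho> (S X R n Xs c) - \<rho> (S X R n Xs c')\<bar> \<le> ereal \<bar>c - c'\<bar> * ereal K"
    if "0 \<le> c" "0 \<le> c'" for c c'
    using lipschitz_onD[OF \<open>K-lipschitz_on {0..} g\<close>, of c c'] that real[of c] real[of c']
    by (simp add: dist_real_def mult.commute)
  moreover have "\<rho> (S X R n Xs (real_of_ereal (cstar \<rho> (S X R n Xs)))) = 0"
    if "0 < cstar \<rho> (S X R n Xs)" "cstar \<rho> (S X R n Xs) < \<infinity>"
    by (rule cstar_risk_zero[OF _ _ that])
      (auto simp: real intro: continuous_on_subset[OF \<open>continuous_on {0..} g\<close>])
  ultimately show ?thesis
    using antimono K(1) unfolding Z_def by auto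
qed

end
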